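(* Let $(\Omega,\Sigma,\mu;\phi)$ be a bimeasurable measure preserving dynamical system. Then for every $A\in\Sigma$ the minimal invariant superset $A^*$ belongs to $\Sigma_{\mathrm{inv}}$ and \[A^*=\bigcup_{m\in\mathbb{N}_0}\phi^{-m}\Bigl(\bigcup_{n\in\mathbb{N}_0}\phi^n(A)\Bigr),\qquad \mu\Bigl(A^*\,\triangle\,\bigcup_{n\in\mathbb{N}_0}\phi^n(A)\Bigr)=0.\]
   Context: A measure preserving dynamical system $(\Omega,\Sigma,\mu;\phi)$ is a probability space with a measurable map $\phi\colon\Omega\to\Omega$ such that $\mu(\phi^{-1}(A))=\mu(A)$ for all $A\in\Sigma$; it is bimeasurable if $\phi^{-1}(A),\phi(A)\in\Sigma$ for all $A\in\Sigma$. $\Sigma_{\mathrm{inv}}=\{A\in\Sigma:\phi^{-1}(A)=A\}$. For $A\subseteq\Omega$, the minimal invariant superset $A^*$ is the intersection of all sets $B\subseteq\Omega$ with $A\subseteq B$ and $\phi^{-1}(B)=B$. *)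

theory Defs
  imports "HOL-Probability.Probability"
begin

definition mpds :: "'a measure \<Rightarrow> ('a \<Rightarrow> 'a) \<Rightarrow> bool" where
  "mpds M phi \<longleftrightarrow> prob_space M \<and> phi \<in> M \<rightarrow>\<^sub>M M \<and>
     (\<forall>A\<in>sets M. emeasure M (phi -` A \<inter> space M) = emeasure M A)"

definition bimeasurable_mpds :: "'a measure \<Rightarrow> ('a \<Rightarrow> 'a) \<Rightarrow> bool" where
  "bimeasurable_mpds M phi \<longleftrightarrow> mpds M phi \<and>
     (\<forall>A\<in>sets M. phi -` A \<inter> space M \<in> sets M \<and> phi ` A \<in> sets M)"

definition inv_sets :: "'a measure \<Rightarrow> ('a \<Rightarrow> 'a) \<Rightarrow> 'a set set" where
  "inv_sets M phi = {A \<in> sets M. phi -` A \<inter> space M = A}"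

definition min_inv_superset :: "'a measure \<Rightarrow> ('a \<Rightarrow> 'a) \<Rightarrow> 'a set \<Rightarrow> 'a set" where
  "min_inv_superset M phi A =
     \<Inter>{B. B \<subseteq> space M \<and> A \<subseteq> B \<and> phi -` B \<inter> space M = B}"

end

theory Submission
  imports Defs
begin

text \<open>The forward orbit O of A is forward invariant, so its preimages under the iterates of
  \<phi> increase; their union is invariant, and every invariant superset of A contains O and hence
  all these preimages, so the union is A*.  Bimeasurability makes O measurable, and since \<phi>
  preserves \<mu>, every preimage of O has measure \<mu>(O).  Continuity from below gives
  \<mu>(A*) = \<mu>(O), and as \<mu> is finite and O \<subseteq> A*, the difference A* - O is null.\<close>

definition forward_orbit :: "('a \<Rightarrow> 'a) \<Rightarrow> 'a set \<Rightarrow> 'a set" where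
  "forward_orbit phi A = (\<Union>n. (phi ^^ n) ` A)"

lemma subset_forward_orbit: "A \<subseteq> forward_orbit phi A"
  unfolding forward_orbit_def using UN_upper[of 0 UNIV "\<lambda>n. (phi ^^ n) ` A"] by simp

lemma forward_orbit_closed:
  assumes "x \<in> forward_orbit phi A"
  shows "phi x \<in> forward_orbit phi A"
proof -
  obtain n a where "a \<in> A" and "x = (phi ^^ n) a"
    using assms unfolding forward_orbit_def by blast
  then have "phi x \<in> (phi ^^ Suc n) ` A" by simp
  then show ?thesis unfolding forward_orbit_def by blast
qed

lemma forward_orbit_subset:
  assumes "A \<subseteq> C" and "\<And>x. x \<in> C \<Longrightarrow> phi x \<in> C"
  shows "forward_orbit phi A \<subseteq> C"
proof -
  have "(phi ^^ n) a \<in> C" if "a \<in> A" for n a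
    by (induction n) (use that assms in auto)
  then show ?thesis unfolding forward_orbit_def by auto
qed

lemma funpow_vimage_Suc:
  assumes "\<And>x. x \<in> S \<Longrightarrow> f x \<in> S"
  shows "(f ^^ Suc m) -` B \<inter> S = f -` ((f ^^ m) -` B \<inter> S) \<inter> S"
  using assms by (auto simp: funpow_swap1)

lemma incseq_funpow_vimage:
  assumes "\<And>x. x \<in> B \<Longrightarrow> f x \<in> B"
  shows "incseq (\<lambda>m. (f ^^ m) -` B \<inter> S)"
proof (rule incseq_SucI)
  show "(f ^^ m) -` B \<inter> S \<subseteq> (f ^^ Suc m) -` B \<inter> S" for m
    using assms by auto
qed

lemma incseq_Union_Suc:
  fixes P :: "nat \<Rightarrow> 'a set"
  assumes "incseq P"
  shows "(\<Union>m. P (Suc m)) = (\<Union>m. P m)"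
proof (intro equalityI subsetI)
  fix x assume "x \<in> (\<Union>m. P m)"
  then obtain m where "x \<in> P m" by blast
  then have "x \<in> P (Suc m)" using incseq_SucD[OF assms] by blast
  then show "x \<in> (\<Union>m. P (Suc m))" by blast
qed auto

context
  fixes M :: "'a measure" and phi :: "'a \<Rightarrow> 'a"
  assumes phi_space: "\<And>x. x \<in> space M \<Longrightarrow> phi x \<in> space M"
begin

lemma invariant_Union_funpow_vimage:
  assumes "\<And>x. x \<in> B \<Longrightarrow> phi x \<in> B"
  shows "phi -` (\<Union>m. (phi ^^ m) -` B \<inter> space M) \<inter> space M
    = (\<Union>m. (phi ^^ m) -` B \<inter> space M)"
proof -
  let ?P = "\<lambda>m. (phi ^^ m) -` B \<inter> space M"
  have "phi -` (\<Union>m. ?P m) \<inter> space M = (\<Union>m. phi -` ?P m \<inter> space M)"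
    by blast
  also have "\<dots> = (\<Union>m. ?P (Suc m))"
    by (simp only: funpow_vimage_Suc[OF phi_space])
  also have "\<dots> = (\<Union>m. ?P m)"
    using incseq_funpow_vimage[OF assms] by (rule incseq_Union_Suc)
  finally show ?thesis .
qed

lemma Union_funpow_vimage_subset_invariant:
  assumes "B \<subseteq> C" and C_inv: "phi -` C \<inter> space M = C"
  shows "(\<Union>m. (phi ^^ m) -` B \<inter> space M) \<subseteq> C"
proof -
  have "x \<in> C" if "x \<in> (phi ^^ m) -` B \<inter> space M" for m x
    using that
  proof (induction m arbitrary: x)
    case (Suc m)
    then have "phi x \<in> (phi ^^ m) -` B \<inter> space M"
      using phi_space by (simp add: funpow_swap1)
    then show ?case using Suc.IH Suc.prems C_inv by blast
  qed (use assms in auto)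
  then show ?thesis by blast
qed

lemma min_inv_superset_eq_Union_funpow_vimage:
  assumes "A \<subseteq> space M"
  shows "min_inv_superset M phi A
    = (\<Union>m. (phi ^^ m) -` forward_orbit phi A \<inter> space M)"
    (is "_ = ?B")
proof -
  have "A \<subseteq> (phi ^^ 0) -` forward_orbit phi A \<inter> space M"
    using assms subset_forward_orbit[of A phi] by auto
  then have "A \<subseteq> ?B" by blast
  moreover have "phi -` ?B \<inter> space M = ?B"
    using forward_orbit_closed by (rule invariant_Union_funpow_vimage)
  moreover have "?B \<subseteq> C" if "A \<subseteq> C" "phi -` C \<inter> space M = C" for C
    using that by (intro Union_funpow_vimage_subset_invariant forward_orbit_subset) blast+
  ultimately show ?thesis
    unfolding min_inv_superset_def by (intro antisym Inf_lower Inf_greatest) auto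
qed

end

lemma measurable_funpow: "f \<in> M \<rightarrow>\<^sub>M M \<Longrightarrow> f ^^ n \<in> M \<rightarrow>\<^sub>M M"
  by (induction n) (auto simp: funpow_Suc_right)

lemma forward_orbit_sets:
  assumes "\<And>B. B \<in> sets M \<Longrightarrow> phi ` B \<in> sets M" and "A \<in> sets M"
  shows "forward_orbit phi A \<in> sets M"
proof -
  have "(phi ^^ n) ` A \<in> sets M" for n
  proof (induction n)
    case (Suc n)
    have "(phi ^^ Suc n) ` A = phi ` (phi ^^ n) ` A" by (simp add: image_comp)
    then show ?case using assms(1)[OF Suc] by simp
  qed (simp add: assms(2))
  then show ?thesis unfolding forward_orbit_def by auto
qed

lemma mpds_emeasure_funpow_vimage:
  assumes "mpds M phi" and "B \<in> sets M"
  shows "emeasure M ((phi ^^ m) -` B \<inter> space M) = emeasure M B"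
proof (induction m)
  case 0
  show ?case using sets.Int_space_eq2[OF assms(2)] by simp
next
  case (Suc m)
  have meas: "phi \<in> M \<rightarrow>\<^sub>M M"
    and pres: "\<And>C. C \<in> sets M \<Longrightarrow> emeasure M (phi -` C \<inter> space M) = emeasure M C"
    using assms(1) unfolding mpds_def by auto
  have "(phi ^^ Suc m) -` B \<inter> space M = phi -` ((phi ^^ m) -` B \<inter> space M) \<inter> space M"
    using measurable_space[OF meas] by (rule funpow_vimage_Suc)
  also have "emeasure M \<dots> = emeasure M ((phi ^^ m) -` B \<inter> space M)"
    using measurable_sets[OF measurable_funpow[OF meas] assms(2)] by (rule pres)
  also have "\<dots> = emeasure M B" by (fact Suc)
  finally show ?case .
qed

lemma (in finite_measure) emeasure_Union_incseq_Diff_first: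
  assumes "incseq P" and "\<And>m. P m \<in> sets M" and "\<And>m. emeasure M (P m) = emeasure M (P 0)"
  shows "emeasure M ((\<Union>m. P m) - P 0) = 0"
proof -
  have "emeasure M (\<Union>m. P m) = (SUP m. emeasure M (P m))"
    using assms by (intro SUP_emeasure_incseq[symmetric]) auto
  also have "\<dots> = (SUP m::nat. emeasure M (P 0))"
    using assms(3) by (intro SUP_cong) auto
  finally have "emeasure M (\<Union>m. P m) = emeasure M (P 0)" by simp
  then show ?thesis
    using assms by (subst emeasure_Diff) (auto simp: emeasure_eq_measure)
qed

theorem lemma3p5:
  fixes M :: "'a measure" and phi :: "'a \<Rightarrow> 'a" and A :: "'a set"
  assumes "bimeasurable_mpds M phi"
    and "A \<in> sets M"
  shows "min_inv_superset M phi A \<in> inv_sets M phi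
    \<and> min_inv_superset M phi A =
        (\<Union>m::nat. (phi ^^ m) -` (\<Union>n::nat. (phi ^^ n) ` A) \<inter> space M)
    \<and> emeasure M ((min_inv_superset M phi A - (\<Union>n::nat. (phi ^^ n) ` A))
                 \<union> ((\<Union>n::nat. (phi ^^ n) ` A) - min_inv_superset M phi A)) = 0"
proof -
  have mpds: "mpds M phi" and ps: "prob_space M" and meas: "phi \<in> M \<rightarrow>\<^sub>M M"
    and img: "\<And>B. B \<in> sets M \<Longrightarrow> phi ` B \<in> sets M"
    using assms(1) unfolding bimeasurable_mpds_def mpds_def by auto
  interpret prob_space M by (fact ps)
  note phi_space = measurable_space[OF meas]
  define Orb where "Orb = forward_orbit phi A"
  define P where "P m = (phi ^^ m) -` Orb \<inter> space M" for m
  have Orb_sets: "Orb \<in> sets M" unfolding Orb_def using img assms(2) by (rule forward_orbit_sets)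
  have P_sets: "P m \<in> sets M" for m
    unfolding P_def using measurable_sets[OF measurable_funpow[OF meas] Orb_sets] .
  have A_star: "min_inv_superset M phi A = (\<Union>m. P m)"
    unfolding P_def Orb_def using phi_space sets.sets_into_space[OF assms(2)]
    by (rule min_inv_superset_eq_Union_funpow_vimage)
  have P0: "P 0 = Orb" unfolding P_def using sets.Int_space_eq2[OF Orb_sets] by simp
  have A_star_inv: "phi -` (\<Union>m. P m) \<inter> space M = (\<Union>m. P m)"
    unfolding P_def Orb_def using phi_space forward_orbit_closed
    by (rule invariant_Union_funpow_vimage)
  have "emeasure M ((\<Union>m. P m) - Orb) = 0"
    unfolding P0[symmetric]
  proof (rule emeasure_Union_incseq_Diff_first)
    show "incseq P" unfolding P_def Orb_def using forward_orbit_closed by (rule incseq_funpow_vimage)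
    show "emeasure M (P m) = emeasure M (P 0)" for m
      unfolding P_def by (simp only: mpds_emeasure_funpow_vimage[OF mpds Orb_sets])
  qed (fact P_sets)
  moreover have "(\<Union>m. P m) \<in> sets M" using P_sets by blast
  moreover have "((\<Union>m. P m) - Orb) \<union> (Orb - (\<Union>m. P m)) = (\<Union>m. P m) - Orb"
    using P0 by blast
  moreover have orbit_eq: "(\<Union>n. (phi ^^ n) ` A) = Orb" unfolding Orb_def forward_orbit_def ..
  ultimately show ?thesis
    using A_star_inv unfolding A_star inv_sets_def orbit_eq P_def[symmetric] by simp
qed

end
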